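(* Let $(M,J)$ be an almost complex manifold and $\phi$ a Beltrami differential with $\det(I'-\phi\cdot\bar\phi)\neq0$ everywhere. Then, as operators on complex differential forms on $M$, $$e^{-i_\phi}\circ e^{i_\phi|i_{\bar\phi}}=(I-\bar\phi\cdot\phi+\bar\phi)\Finv,$$ $$\big(e^{i_\phi|i_{\bar\phi}}\big)^{-1}\circ e^{i_\phi}=\big(I'+(I''-\bar\phi\cdot\phi)^{-1}-\bar\phi\cdot(I'-\phi\cdot\bar\phi)^{-1}\big)\Finv.$$
   Context: $(M,J)$ is a smooth almost complex manifold of real dimension $2n$ ($J$ not assumed integrable). Locally $\{\theta^i\}_{i=1}^n$ is a frame of $(1,0)$-forms, $\{e_i\}$ the dual frame of $T^{1,0}M$, $\theta^{\bar i}=\overline{\theta^i}$, $e_{\bar i}=\overline{e_i}$. A Beltrami differential is $\phi\in A^{0,1}(M,T^{1,0}M)$. Contraction: $(\rho\otimes X)\lrcorner\alpha:=\rho\wedge(X\lrcorner\alpha)$, extended linearly; $i_\phi=\phi\lrcorner$, $e^{\pm i_\phi}:=\sum_k\frac{(\pm1)^k}{k!}i_\phi^k$. Write $\phi=\phi^i_{\bar j}\theta^{\bar j}\otimes e_i$ and $\bar\phi=\phi^{\bar i}_j\theta^j\otimes e_{\bar i}$ with $\phi^{\bar i}_j=\overline{\phi^i_{\bar j}}$. Identify these with $n\times n$ matrices $\phi=(\phi^i_{\bar j})$, $\bar\phi=(\phi^{\bar i}_j)$ (upper index = row) and $I'$, $I''$ with identity matrices; a matrix expression built from them is identified with the vector-valued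 1-form having these coefficients in the corresponding frames (frame independent): $\bar\phi\cdot\phi$ and $(I''-\bar\phi\cdot\phi)^{-1}$ are $T^{0,1}$-valued $(0,1)$-forms (coefficients times $\theta^{\bar j}\otimes e_{\bar i}$), $\bar\phi\cdot(I'-\phi\cdot\bar\phi)^{-1}$ is the $T^{0,1}$-valued $(1,0)$-form $(\bar\phi\cdot(I'-\phi\cdot\bar\phi)^{-1})^{\bar i}_j\theta^j\otimes e_{\bar i}$, $I'=\theta^i\otimes e_i$, $I''=\theta^{\bar i}\otimes e_{\bar i}$, $I=I'+I''$. For a $T^{\mathbb C}M$-valued 1-form $\varphi$, the simultaneous contraction $\varphi\Finv$ is the function-linear map on forms with $\varphi\Finv(f\beta_1\wedge\cdots\wedge\beta_k)=f(\varphi\lrcorner\beta_1)\wedge\cdots\wedge(\varphi\lrcorner\beta_k)$ for 1-forms $\beta_j$ (and $\varphi\Finv f=f$ for functions); it is not additive in $\varphi$. The extended exponential operator is $e^{i_\phi|i_{\bar\phi}}:=(I+\phi+\bar\phi)\Finv$, i.e. it sends $\theta^i\mapsto\theta^i+\phi\lrcorner\theta^i$, $\theta^{\bar j}\mapsto\theta^{\bar j}+\bar\phi\lrcorner\theta^{\bar j}$, extended multiplicatively; under the determinant condition it is a linear isomorphism on forms, and $(e^{i_\phi|i_{\bar\phi}})^{-1}$ denotes its inverse. *)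

theory Defs
  imports "HOL-Analysis.Analysis"
begin

text \<open>Pointwise model.  At a point of M, the complexified cotangent space is spanned by
  the coframe theta^1..theta^n, theta^{1bar}..theta^{nbar}; we index this basis by the type
  'n + 'n (Inl i = unbarred index i, Inr i = barred index i).  Tangent vectors are
  v :: complex^('n+'n) (coefficients w.r.t. e_i, e_{ibar}), and theta^q(v) = v$q.
  A T^C M-valued 1-form sum M_pq theta^q (x) e_p is the matrix M with M$p$q.
  A complex form is a family of k-forms (k = 0,1,2,...), a k-form being an alternating
  complex-multilinear function of k tangent vectors (determinant convention for wedge).\<close>

type_synonym 'n tv = "complex^('n+'n)"
type_synonym 'n form = "nat \<Rightarrow> (nat \<Rightarrow> 'n tv) \<Rightarrow> complex"

definition is_kform :: "nat \<Rightarrow> ((nat \<Rightarrow> 'n::finite tv) \<Rightarrow> complex) \<Rightarrow> bool" where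
  "is_kform k w \<longleftrightarrow>
     (\<forall>vs ws. (\<forall>i<k. vs i = ws i) \<longrightarrow> w vs = w ws) \<and>
     (\<forall>i<k. \<forall>vs x y. w (vs(i := x + y)) = w (vs(i := x)) + w (vs(i := y))) \<and>
     (\<forall>i<k. \<forall>vs (c::complex) x. w (vs(i := c *s x)) = c * w (vs(i := x))) \<and>
     (\<forall>i<k. \<forall>j<k. \<forall>vs. i \<noteq> j \<and> vs i = vs j \<longrightarrow> w vs = 0)"

definition forms :: "'n::finite form set" where
  "forms = {w. \<forall>k. is_kform k (w k)}"

definition theta :: "'n::finite + 'n \<Rightarrow> 'n tv \<Rightarrow> complex" where
  "theta q v = v $ q"

definition frame :: "'n::finite + 'n \<Rightarrow> 'n tv" where
  "frame p = axis p 1"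

definition interior :: "'n::finite tv \<Rightarrow> 'n form \<Rightarrow> 'n form" where
  "interior X a = (\<lambda>k vs. a (Suc k) (\<lambda>i. case i of 0 \<Rightarrow> X | Suc j \<Rightarrow> vs j))"

definition delete_arg :: "nat \<Rightarrow> (nat \<Rightarrow> 'a) \<Rightarrow> nat \<Rightarrow> 'a" where
  "delete_arg j vs = (\<lambda>i. if i < j then vs i else vs (Suc i))"

definition wedge1 :: "('n::finite tv \<Rightarrow> complex) \<Rightarrow> 'n form \<Rightarrow> 'n form" where
  "wedge1 rho g = (\<lambda>k vs. if k = 0 then 0 else
      (\<Sum>j<k. (-1) ^ j * rho (vs j) * g (k - 1) (delete_arg j vs)))"

text \<open>Contraction i_M alpha = M \<lrcorner> alpha for M = sum M_pq theta^q (x) e_p,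
  using (rho (x) X) \<lrcorner> alpha = rho \<and> (X \<lrcorner> alpha), extended linearly.\<close>
definition icontr :: "complex^('n::finite+'n)^('n+'n) \<Rightarrow> 'n form \<Rightarrow> 'n form" where
  "icontr M a = (\<lambda>k vs. \<Sum>p\<in>UNIV. \<Sum>q\<in>UNIV.
      M $ p $ q * wedge1 (theta q) (interior (frame p) a) k vs)"

text \<open>e^{s i_M} = sum_m s^m/m! i_M^m (on k-forms i_M^m = 0 for m > k).\<close>
definition exp_contr :: "complex \<Rightarrow> complex^('n::finite+'n)^('n+'n) \<Rightarrow> 'n form \<Rightarrow> 'n form" where
  "exp_contr s M a = (\<lambda>k vs. \<Sum>m\<le>k. s ^ m / fact m * ((icontr M ^^ m) a) k vs)"

text \<open>Simultaneous contraction M \<Finv>: function-linear and multiplicative with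
  beta \<mapsto> M \<lrcorner> beta = beta \<circ> (M *v _) on 1-forms, i.e. the pullback along M *v _.\<close>
definition simcontr :: "complex^('n::finite+'n)^('n+'n) \<Rightarrow> 'n form \<Rightarrow> 'n form" where
  "simcontr M a = (\<lambda>k vs. a k (\<lambda>i. M *v vs i))"

text \<open>Block matrix with blocks (rows = upper index):
  P : theta^j (x) e_i,  Q : theta^{jbar} (x) e_i,  R : theta^j (x) e_{ibar},  S : theta^{jbar} (x) e_{ibar}.\<close>
definition block :: "complex^'n^'n \<Rightarrow> complex^'n^'n \<Rightarrow> complex^'n^'n \<Rightarrow> complex^'n^'n
    \<Rightarrow> complex^('n::finite+'n)^('n+'n)" where
  "block P Q R S = (\<chi> p q. case p of
       Inl i \<Rightarrow> (case q of Inl j \<Rightarrow> P $ i $ j | Inr j \<Rightarrow> Q $ i $ j)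
     | Inr i \<Rightarrow> (case q of Inl j \<Rightarrow> R $ i $ j | Inr j \<Rightarrow> S $ i $ j))"

definition conj_mat :: "complex^'n^'m \<Rightarrow> complex^'n^'m" where
  "conj_mat A = (\<chi> i j. cnj (A $ i $ j))"

end

theory Submission
  imports Defs
begin

text \<open>On a k-form the contraction \<open>i\<^sub>N\<close> with a vector-valued 1-form \<open>N\<close> acts as a derivation,
  replacing one argument \<open>v\<^sub>j\<close> at a time by \<open>N v\<^sub>j\<close>. When \<open>N\<^sup>2 = 0\<close>, as for \<open>N = phi\<close>, the
  exponential series collapses to the multilinear expansion of the form evaluated at the
  arguments \<open>v\<^sub>j + s N v\<^sub>j\<close>, so \<open>exp (s i\<^sub>N)\<close> is the pullback along \<open>I + s N\<close>. Simultaneous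
  contraction by \<open>M\<close> is the pullback along \<open>M\<close>, and pullbacks compose contravariantly; hence both
  identities reduce to the block-matrix identities
  \<open>(I + phi + phibar)(I - phi) = I - phibar phi + phibar\<close> and \<open>B (I + phi + phibar) = I + phi\<close>,
  where \<open>B\<close> is the matrix on the right of the second identity. The latter is the push-through
  identity \<open>(I - phibar phi)\<^sup>-\<^sup>1 = I + phibar (I - phi phibar)\<^sup>-\<^sup>1 phi\<close> in disguise. Finally
  \<open>I + phi + phibar\<close> is invertible, so its pullback is injective on forms, which pins down the
  inverse operator.\<close>

section \<open>Alternating multilinear forms\<close>

lemma kform_cong: "is_kform k b \<Longrightarrow> (\<And>i. i < k \<Longrightarrow> vs i = ws i) \<Longrightarrow> b vs = b ws"
  unfolding is_kform_def by blast

lemma kform_add: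
  "is_kform k b \<Longrightarrow> i < k \<Longrightarrow> b (vs(i := x + y)) = b (vs(i := x)) + b (vs(i := y))"
  unfolding is_kform_def by blast

lemma kform_smult: "is_kform k b \<Longrightarrow> i < k \<Longrightarrow> b (vs(i := c *s x)) = c * b (vs(i := x))"
  unfolding is_kform_def by blast

lemma kform_alternating:
  "is_kform k b \<Longrightarrow> i < k \<Longrightarrow> j < k \<Longrightarrow> i \<noteq> j \<Longrightarrow> vs i = vs j \<Longrightarrow> b vs = 0"
  unfolding is_kform_def by blast

lemma kform_zero: "is_kform k b \<Longrightarrow> i < k \<Longrightarrow> b (vs(i := 0)) = 0"
  using kform_smult[of k b i vs 0 0] by simp

lemma kform_sum:
  assumes b: "is_kform k b" and i: "i < k" and "finite P"
  shows "b (vs(i := (\<Sum>p\<in>P. f p))) = (\<Sum>p\<in>P. b (vs(i := f p)))"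
  using \<open>finite P\<close>
proof induction
  case empty
  show ?case by (simp only: sum.empty kform_zero[OF b i])
next
  case (insert p P)
  then show ?case by (simp only: sum.insert[OF insert.hyps] kform_add[OF b i] insert.IH)
qed

lemma kform_swap:
  assumes b: "is_kform k b" and "i < k" "l < k" "i \<noteq> l"
  shows "b (vs(i := x, l := y)) = - b (vs(i := y, l := x))"
proof -
  have diag: "b (vs(i := u, l := u)) = 0" for u
    by (rule kform_alternating[OF b \<open>i < k\<close> \<open>l < k\<close> \<open>i \<noteq> l\<close>]) simp
  have expand: "b (vs(i := u, l := x + y)) = b (vs(i := u, l := x)) + b (vs(i := u, l := y))" for u
    by (rule kform_add[OF b \<open>l < k\<close>])
  have "0 = b (vs(i := x + y, l := x + y))" using diag by simp
  also have "\<dots> = b (vs(i := x, l := x + y)) + b (vs(i := y, l := x + y))"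
    using kform_add[OF b \<open>i < k\<close>, of "vs(l := x + y)"] \<open>i \<noteq> l\<close> by (simp add: fun_upd_twist)
  also have "\<dots> = b (vs(i := x, l := y)) + b (vs(i := y, l := x))"
    by (simp add: expand diag)
  finally show ?thesis by (simp add: eq_neg_iff_add_eq_0)
qed

lemma kform_case_nat_delete_arg:
  assumes b: "is_kform k b"
  shows "j < k \<Longrightarrow> b (case_nat x (delete_arg j vs)) = (-1) ^ j * b (vs(j := x))"
proof (induction j arbitrary: vs)
  case 0
  have "case_nat x (delete_arg 0 vs) = vs(0 := x)"
    by (auto simp: delete_arg_def fun_eq_iff split: nat.split)
  then show ?case by simp
next
  case (Suc j)
  define vs' where "vs' = vs(Suc j := vs j)"
  have "delete_arg j vs' = delete_arg (Suc j) vs"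
    by (auto simp: vs'_def delete_arg_def fun_eq_iff less_Suc_eq)
  then have "b (case_nat x (delete_arg (Suc j) vs)) = (-1) ^ j * b (vs(j := x, Suc j := vs j))"
    using Suc.IH[of vs'] Suc.prems by (simp add: vs'_def fun_upd_twist del: fun_upd_apply)
  also have "b (vs(j := x, Suc j := vs j)) = - b (vs(j := vs j, Suc j := x))"
    using kform_swap[OF b, of j "Suc j"] Suc.prems by simp
  also have "vs(j := vs j, Suc j := x) = vs(Suc j := x)"
    by simp
  finally show ?case by simp
qed

lemma sum_frame_expansion: "(\<Sum>p\<in>UNIV. x $ p *s frame p) = (x :: 'n::finite tv)"
  by (simp add: vec_eq_iff sum_component frame_def axis_def if_distrib cong: if_cong)

lemma kform_expand_first:
  assumes b: "is_kform k b" and "0 < k"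
  shows "b (case_nat x D) = (\<Sum>p\<in>UNIV. x $ p * b (case_nat (frame p) D))"
proof -
  have upd: "case_nat y D = (case_nat 0 D)(0 := y)" for y
    by (auto simp: fun_eq_iff split: nat.split)
  have "b (case_nat x D) = b ((case_nat 0 D)(0 := (\<Sum>p\<in>UNIV. x $ p *s frame p)))"
    by (simp only: sum_frame_expansion upd[symmetric])
  also have "\<dots> = (\<Sum>p\<in>UNIV. b ((case_nat 0 D)(0 := x $ p *s frame p)))"
    by (rule kform_sum[OF b \<open>0 < k\<close> finite])
  also have "\<dots> = (\<Sum>p\<in>UNIV. x $ p * b ((case_nat 0 D)(0 := frame p)))"
    by (simp only: kform_smult[OF b \<open>0 < k\<close>])
  also have "\<dots> = (\<Sum>p\<in>UNIV. x $ p * b (case_nat (frame p) D))"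
    by (simp only: upd[symmetric])
  finally show ?thesis .
qed

section \<open>Contraction as a derivation\<close>

definition slot_derivation ::
    "nat \<Rightarrow> complex^('n::finite+'n)^('n+'n) \<Rightarrow> ((nat \<Rightarrow> 'n tv) \<Rightarrow> complex) \<Rightarrow> (nat \<Rightarrow> 'n tv) \<Rightarrow> complex"
  where "slot_derivation k N b vs = (\<Sum>j<k. b (vs(j := N *v vs j)))"

lemma icontr_eq_slot_derivation:
  assumes a: "is_kform k (a k)"
  shows "icontr N a k = slot_derivation k N (a k)"
proof
  fix vs
  show "icontr N a k vs = slot_derivation k N (a k) vs"
  proof (cases k)
    case 0
    then show ?thesis by (simp add: icontr_def wedge1_def slot_derivation_def)
  next
    case (Suc k')
    let ?A = "\<lambda>p j. a k (case_nat (frame p) (delete_arg j vs))"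
    have "icontr N a k vs = (\<Sum>p\<in>UNIV. \<Sum>q\<in>UNIV. \<Sum>j<k. (-1) ^ j * (N$p$q * vs j $ q * ?A p j))"
      using Suc by (simp add: icontr_def wedge1_def interior_def theta_def sum_distrib_left
          algebra_simps)
    also have "\<dots> = (\<Sum>p\<in>UNIV. \<Sum>j<k. \<Sum>q\<in>UNIV. (-1) ^ j * (N$p$q * vs j $ q * ?A p j))"
      by (rule sum.cong[OF refl], rule sum.swap)
    also have "\<dots> = (\<Sum>j<k. \<Sum>p\<in>UNIV. \<Sum>q\<in>UNIV. (-1) ^ j * (N$p$q * vs j $ q * ?A p j))"
      by (rule sum.swap)
    also have "\<dots> = (\<Sum>j<k. (-1) ^ j * (\<Sum>p\<in>UNIV. (N *v vs j) $ p * ?A p j))"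
      by (simp add: matrix_vector_mult_def sum_distrib_left sum_distrib_right algebra_simps)
    also have "\<dots> = (\<Sum>j<k. (-1) ^ j * a k (case_nat (N *v vs j) (delete_arg j vs)))"
      using kform_expand_first[OF a, symmetric] Suc by simp
    also have "\<dots> = slot_derivation k N (a k) vs"
      by (simp add: kform_case_nat_delete_arg[OF a] slot_derivation_def)
    finally show ?thesis .
  qed
qed

lemma slot_derivation_alternating:
  assumes b: "is_kform k b" and "i < k" "l < k" "i \<noteq> l" "vs i = vs l"
  shows "slot_derivation k N b vs = 0"
proof -
  let ?t = "\<lambda>j. b (vs(j := N *v vs j))"
  have others: "?t j = 0" if "j < k" "j \<noteq> i" "j \<noteq> l" for j
    by (rule kform_alternating[OF b \<open>i < k\<close> \<open>l < k\<close> \<open>i \<noteq> l\<close>]) (use assms that in auto)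
  have "vs(l := N *v vs l) = vs(i := vs i, l := N *v vs i)"
    using assms by (auto simp: fun_eq_iff)
  then have "?t l = - b (vs(i := N *v vs i, l := vs i))"
    using kform_swap[OF b \<open>i < k\<close> \<open>l < k\<close> \<open>i \<noteq> l\<close>] by simp
  also have "vs(i := N *v vs i, l := vs i) = vs(i := N *v vs i)"
    using assms by (auto simp: fun_eq_iff)
  finally have "?t l = - ?t i" .
  then have cancel: "?t i + ?t l = 0" by simp
  have rest: "(\<Sum>j\<in>{..<k} - {i} - {l}. ?t j) = 0"
    using others by (intro sum.neutral) auto
  have "slot_derivation k N b vs = ?t i + ?t l + (\<Sum>j\<in>{..<k} - {i} - {l}. ?t j)"
    using assms by (simp add: slot_derivation_def sum.remove[of _ i] sum.remove[of _ l])
  then show ?thesis by (simp only: cancel rest add_0)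
qed

lemma kform_slot_derivation:
  assumes b: "is_kform k b"
  shows "is_kform k (slot_derivation k N b)"
proof -
  have slot_i: "(vs(i := z))(i := N *v (vs(i := z)) i) = vs(i := N *v z)" for vs i z
    by simp
  have slot_j: "(vs(i := z))(j := N *v (vs(i := z)) j) = (vs(j := N *v vs j))(i := z)"
    if "j \<noteq> i" for vs i j z
    using that by (auto simp: fun_eq_iff)
  have add: "slot_derivation k N b (vs(i := x + y))
      = slot_derivation k N b (vs(i := x)) + slot_derivation k N b (vs(i := y))"
    if "i < k" for i vs x y
    unfolding slot_derivation_def sum.distrib[symmetric]
  proof (intro sum.cong refl)
    fix j
    show "b ((vs(i := x + y))(j := N *v (vs(i := x + y)) j))
        = b ((vs(i := x))(j := N *v (vs(i := x)) j)) + b ((vs(i := y))(j := N *v (vs(i := y)) j))"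
      by (cases "j = i")
        (simp_all only: slot_i slot_j not_False_eq_True matrix_vector_right_distrib
          kform_add[OF b \<open>i < k\<close>])
  qed
  have smult: "slot_derivation k N b (vs(i := c *s x)) = c * slot_derivation k N b (vs(i := x))"
    if "i < k" for i vs c x
    unfolding slot_derivation_def sum_distrib_left
  proof (intro sum.cong refl)
    fix j
    show "b ((vs(i := c *s x))(j := N *v (vs(i := c *s x)) j))
        = c * b ((vs(i := x))(j := N *v (vs(i := x)) j))"
      by (cases "j = i")
        (simp_all only: slot_i slot_j not_False_eq_True vec.scale kform_smult[OF b \<open>i < k\<close>])
  qed
  have cong: "slot_derivation k N b vs = slot_derivation k N b ws"
    if "\<forall>i<k. vs i = ws i" for vs ws
    unfolding slot_derivation_def
    by (intro sum.cong refl kform_cong[OF b]) (use that in auto)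
  show ?thesis
    unfolding is_kform_def
    using add smult cong slot_derivation_alternating[OF b] by blast
qed

lemma kform_slot_derivation_power: "is_kform k b \<Longrightarrow> is_kform k ((slot_derivation k N ^^ m) b)"
  by (induction m) (simp_all add: kform_slot_derivation)

lemma icontr_power_eq_slot_derivation_power:
  assumes a: "is_kform k (a k)"
  shows "(icontr N ^^ m) a k = (slot_derivation k N ^^ m) (a k)"
proof (induction m)
  case (Suc m)
  have "is_kform k ((icontr N ^^ m) a k)"
    using Suc.IH kform_slot_derivation_power[OF a] by simp
  then show ?case
    using Suc.IH by (simp add: icontr_eq_slot_derivation)
qed simp

definition map_slots ::
    "complex^('n::finite+'n)^('n+'n) \<Rightarrow> nat set \<Rightarrow> (nat \<Rightarrow> 'n tv) \<Rightarrow> nat \<Rightarrow> 'n tv"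
  where "map_slots N S vs = (\<lambda>i. if i \<in> S then N *v vs i else vs i)"

definition slot_subsets :: "nat \<Rightarrow> nat \<Rightarrow> nat set set"
  where "slot_subsets k m = {S \<in> Pow {..<k}. card S = m}"

lemma finite_slot_subsets [simp]: "finite (slot_subsets k m)"
  by (simp add: slot_subsets_def)

lemma sum_slot_subsets_insert:
  "(\<Sum>j<k. \<Sum>S\<in>{S \<in> slot_subsets k m. j \<notin> S}. g (insert j S))
     = of_nat (Suc m) * (\<Sum>T\<in>slot_subsets k (Suc m). g T :: 'a::comm_semiring_1)"
proof -
  have reindex: "(\<Sum>S\<in>{S \<in> slot_subsets k m. j \<notin> S}. g (insert j S))
      = (\<Sum>T\<in>slot_subsets k (Suc m). if j \<in> T then g T else 0)" if "j < k" for j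
  proof -
    have "(\<Sum>S\<in>{S \<in> slot_subsets k m. j \<notin> S}. g (insert j S))
        = (\<Sum>T\<in>{T \<in> slot_subsets k (Suc m). j \<in> T}. g T)"
      by (rule sum.reindex_bij_witness[of _ "\<lambda>T. T - {j}" "insert j"])
        (use that in \<open>auto simp: slot_subsets_def card_Diff_singleton insert_absorb
          finite_subset[OF _ finite_lessThan]\<close>)
    then show ?thesis by (simp add: sum.inter_filter)
  qed
  have count: "(\<Sum>j<k. if j \<in> T then g T else 0) = of_nat (Suc m) * g T"
    if "T \<in> slot_subsets k (Suc m)" for T
  proof -
    have "{j \<in> {..<k}. j \<in> T} = T" using that by (auto simp: slot_subsets_def)
    then show ?thesis
      using that sum.inter_filter[of "{..<k}" "\<lambda>_. g T" "\<lambda>j. j \<in> T"]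
      by (simp add: slot_subsets_def)
  qed
  have "(\<Sum>j<k. \<Sum>S\<in>{S \<in> slot_subsets k m. j \<notin> S}. g (insert j S))
      = (\<Sum>j<k. \<Sum>T\<in>slot_subsets k (Suc m). if j \<in> T then g T else 0)"
    by (simp add: reindex)
  also have "\<dots> = (\<Sum>T\<in>slot_subsets k (Suc m). \<Sum>j<k. if j \<in> T then g T else 0)"
    by (rule sum.swap)
  also have "\<dots> = (\<Sum>T\<in>slot_subsets k (Suc m). of_nat (Suc m) * g T)"
    by (rule sum.cong[OF refl count])
  finally show ?thesis by (simp only: sum_distrib_left)
qed

lemma map_slots_update:
  assumes "N ** N = 0"
  shows "map_slots N S (vs(j := N *v vs j))
    = (if j \<notin> S then map_slots N (insert j S) vs else (map_slots N S vs)(j := 0))"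
  using assms by (auto simp: map_slots_def fun_eq_iff matrix_vector_mul_assoc)

text \<open>Since \<open>N\<^sup>2 = 0\<close>, each slot can be hit by \<open>N\<close> at most once, so the \<open>m\<close>-th power of the
  derivation runs over the \<open>m\<close>-element sets of slots, each reached in \<open>m!\<close> orders.\<close>
lemma slot_derivation_power_square_zero:
  assumes NN: "N ** N = 0" and b: "is_kform k b"
  shows "(slot_derivation k N ^^ m) b vs = fact m * (\<Sum>S\<in>slot_subsets k m. b (map_slots N S vs))"
proof (induction m arbitrary: vs)
  case 0
  have "slot_subsets k 0 = {{}}"
    by (auto simp: slot_subsets_def finite_subset[OF _ finite_lessThan])
  then show ?case by (simp add: map_slots_def)
next
  case (Suc m)
  let ?g = "\<lambda>S. b (map_slots N S vs)"
  have drop_hit: "(\<Sum>S\<in>slot_subsets k m. b (map_slots N S (vs(j := N *v vs j))))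
      = (\<Sum>S\<in>{S \<in> slot_subsets k m. j \<notin> S}. ?g (insert j S))" if "j < k" for j
    using that
    by (simp add: map_slots_update[OF NN] kform_zero[OF b] if_distrib[of b] sum.inter_filter
        cong: if_cong)
  have "(slot_derivation k N ^^ Suc m) b vs
      = (\<Sum>j<k. fact m * (\<Sum>S\<in>slot_subsets k m. b (map_slots N S (vs(j := N *v vs j)))))"
    by (simp add: slot_derivation_def Suc.IH fun_upd_def)
  also have "\<dots> = fact m * (\<Sum>j<k. \<Sum>S\<in>{S \<in> slot_subsets k m. j \<notin> S}. ?g (insert j S))"
    by (simp add: drop_hit sum_distrib_left)
  also have "\<dots> = fact (Suc m) * (\<Sum>S\<in>slot_subsets k (Suc m). ?g S)"
    by (simp only: sum_slot_subsets_insert[where g = ?g] fact_Suc mult_ac)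
  finally show ?case .
qed

lemma sum_Pow_insert:
  assumes "finite S" "n \<notin> S"
  shows "(\<Sum>T\<in>Pow (insert n S). f T) = (\<Sum>T\<in>Pow S. f T) + (\<Sum>T\<in>Pow S. f (insert n T))"
proof -
  have "inj_on (insert n) (Pow S)"
    using assms(2) by (intro inj_onI) (metis PowD insert_ident subsetD)
  then show ?thesis
    unfolding Pow_insert using assms
    by (subst sum.union_disjoint) (auto simp: sum.reindex finite_subset)
qed

lemma kform_expand_slots:
  assumes b: "is_kform k b" and "S \<subseteq> {..<k}"
  shows "b (\<lambda>i. if i \<in> S then vs i + s *s (N *v vs i) else vs i)
    = (\<Sum>T\<in>Pow S. s ^ card T * b (map_slots N T vs))"
proof -
  have "finite S" using \<open>S \<subseteq> {..<k}\<close> finite_subset by blast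
  then show ?thesis using \<open>S \<subseteq> {..<k}\<close>
  proof (induction arbitrary: vs)
    case empty
    show ?case by (simp add: map_slots_def)
  next
    case (insert n S)
    have "n < k" using insert.prems by simp
    let ?w = "\<lambda>vs i. if i \<in> S then vs i + s *s (N *v vs i) else vs i"
    define vs' where "vs' = vs(n := N *v vs n)"
    have split: "(\<lambda>i. if i \<in> insert n S then vs i + s *s (N *v vs i) else vs i)
        = (?w vs)(n := vs n + s *s (N *v vs n))"
      by (auto simp: fun_eq_iff)
    have unhit: "(?w vs)(n := vs n) = ?w vs" and hit: "(?w vs)(n := N *v vs n) = ?w vs'"
      using insert.hyps by (auto simp: vs'_def fun_eq_iff)
    have shift: "map_slots N T vs' = map_slots N (insert n T) vs" if "T \<in> Pow S" for T
      using that insert.hyps by (auto simp: map_slots_def vs'_def fun_eq_iff)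
    have "s * b (?w vs') = s * (\<Sum>T\<in>Pow S. s ^ card T * b (map_slots N (insert n T) vs))"
      using insert.IH[of vs'] insert.prems shift by simp
    also have "\<dots> = (\<Sum>T\<in>Pow S. s ^ card (insert n T) * b (map_slots N (insert n T) vs))"
      unfolding sum_distrib_left
      by (intro sum.cong refl) (use insert.hyps in \<open>auto simp: finite_subset card_insert_if\<close>)
    finally have "s * b (?w vs') = \<dots>" .
    moreover have "b (\<lambda>i. if i \<in> insert n S then vs i + s *s (N *v vs i) else vs i)
        = b (?w vs) + s * b (?w vs')"
      by (simp only: split kform_add[OF b \<open>n < k\<close>] kform_smult[OF b \<open>n < k\<close>] unhit hit)
    ultimately show ?case
      using insert.IH[of vs] insert.prems insert.hyps by (simp add: sum_Pow_insert)
  qed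
qed

lemma exp_contr_square_zero:
  assumes NN: "N ** N = 0" and w: "w \<in> forms"
  shows "exp_contr s N w = (\<lambda>k vs. w k (\<lambda>i. vs i + s *s (N *v vs i)))"
proof (intro ext)
  fix k vs
  have a: "is_kform k (w k)" using w by (simp add: forms_def)
  have summand: "s ^ m / fact m * (icontr N ^^ m) w k vs
      = (\<Sum>S\<in>slot_subsets k m. s ^ card S * w k (map_slots N S vs))" for m
  proof -
    have "s ^ m / fact m * (icontr N ^^ m) w k vs
        = s ^ m * (\<Sum>S\<in>slot_subsets k m. w k (map_slots N S vs))"
      by (simp add: icontr_power_eq_slot_derivation_power[where a = w, OF a]
          slot_derivation_power_square_zero[OF NN a])
    then show ?thesis by (simp add: sum_distrib_left slot_subsets_def)
  qed
  have "exp_contr s N w k vs = (\<Sum>m\<le>k. \<Sum>S\<in>slot_subsets k m. s ^ card S * w k (map_slots N S vs))"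
    by (simp only: exp_contr_def summand)
  also have "\<dots> = (\<Sum>S\<in>Pow {..<k}. s ^ card S * w k (map_slots N S vs))"
    unfolding slot_subsets_def
    by (rule sum.group) (auto simp: card_mono[of "{..<k}", simplified])
  also have "\<dots> = w k (\<lambda>i. if i \<in> {..<k} then vs i + s *s (N *v vs i) else vs i)"
    by (rule kform_expand_slots[OF a, symmetric]) simp
  also have "\<dots> = w k (\<lambda>i. vs i + s *s (N *v vs i))"
    by (rule kform_cong[OF a]) simp
  finally show "exp_contr s N w k vs = w k (\<lambda>i. vs i + s *s (N *v vs i))" .
qed

lemma exp_contr_square_zero_plus:
  "N ** N = 0 \<Longrightarrow> w \<in> forms \<Longrightarrow> exp_contr 1 N w = simcontr (mat 1 + N) w"
  by (simp add: exp_contr_square_zero simcontr_def matrix_vector_mult_add_rdistrib)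

lemma exp_contr_square_zero_minus:
  "N ** N = 0 \<Longrightarrow> w \<in> forms \<Longrightarrow> exp_contr (-1) N w = simcontr (mat 1 - N) w"
  by (simp add: exp_contr_square_zero simcontr_def matrix_vector_mult_diff_rdistrib vec_eq_iff)

section \<open>Simultaneous contraction as pullback\<close>

lemma simcontr_simcontr: "simcontr A (simcontr B w) = simcontr (B ** A) w"
  by (simp add: simcontr_def matrix_vector_mul_assoc)

lemma kform_simcontr:
  assumes b: "is_kform k b"
  shows "is_kform k (\<lambda>vs. b (\<lambda>i. M *v vs i))"
proof -
  have upd: "(\<lambda>j. M *v (vs(i := z)) j) = (\<lambda>j. M *v vs j)(i := M *v z)" for vs i z
    by (auto simp: fun_eq_iff)
  show ?thesis
    unfolding is_kform_def upd
    by (auto simp: matrix_vector_right_distrib vec.scale kform_add[OF b] kform_smult[OF b]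
        intro: kform_cong[OF b] kform_alternating[OF b])
qed

lemma simcontr_in_forms: "w \<in> forms \<Longrightarrow> simcontr M w \<in> forms"
  by (simp add: forms_def simcontr_def kform_simcontr)

lemma inv_into_simcontr:
  fixes M :: "complex^('n::finite+'n)^('n+'n)"
  assumes "invertible M" and "w \<in> forms"
  shows "inv_into forms (simcontr M) (simcontr M w) = w"
proof -
  obtain M' where "M ** M' = mat 1"
    using assms(1) invertible_def by blast
  then have "simcontr M' (simcontr M u) = u" for u :: "'n form"
    by (simp only: simcontr_simcontr) (simp add: simcontr_def)
  then have "inj_on (simcontr M) forms"
    by (metis inj_onI)
  then show ?thesis using assms(2) by (rule inv_into_f_f)
qed

section \<open>Matrix and block-matrix algebra\<close>

lemma matrix_add_rdistrib: "((A::'a::semiring_1^'n^'m) + B) ** C = A ** C + B ** C"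
  by (simp add: vec_eq_iff matrix_matrix_mult_def sum.distrib algebra_simps)

lemma matrix_diff_ldistrib: "(A::'a::ring_1^'n^'m) ** (B - C) = A ** B - A ** C"
  by (simp add: vec_eq_iff matrix_matrix_mult_def sum_subtractf algebra_simps)

lemma matrix_diff_rdistrib: "((A::'a::ring_1^'n^'m) - B) ** C = A ** C - B ** C"
  by (simp add: vec_eq_iff matrix_matrix_mult_def sum_subtractf algebra_simps)

lemma matrix_mul_lneg: "(- (A::'a::ring_1^'n^'m)) ** B = - (A ** B)"
  by (simp add: vec_eq_iff matrix_matrix_mult_def sum_negf)

lemma matrix_mul_rneg: "(A::'a::ring_1^'n^'m) ** (- B) = - (A ** B)"
  by (simp add: vec_eq_iff matrix_matrix_mult_def sum_negf)

lemma matrix_inv_inverse: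
  assumes "invertible A"
  shows "A ** matrix_inv A = mat 1" and "matrix_inv A ** A = mat 1"
proof -
  obtain A' where "A ** A' = mat 1 \<and> A' ** A = mat 1"
    using assms invertible_def by blast
  then have "A ** matrix_inv A = mat 1 \<and> matrix_inv A ** A = mat 1"
    unfolding matrix_inv_def by (rule someI)
  then show "A ** matrix_inv A = mat 1" and "matrix_inv A ** A = mat 1"
    by simp_all
qed

lemma matrix_inv_eqI:
  fixes A B :: "'a::field^'n^'n"
  assumes AB: "A ** B = mat 1"
  shows "matrix_inv A = B"
proof -
  have "invertible A"
    using AB invertible_right_inverse by blast
  have "matrix_inv A = matrix_inv A ** (A ** B)"
    by (simp add: AB)
  also have "\<dots> = B"
    by (simp add: matrix_mul_assoc matrix_inv_inverse \<open>invertible A\<close>)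
  finally show ?thesis .
qed

lemma matrix_inv_one_minus_swap:
  fixes P Q :: "'a::field^'n^'n"
  assumes "invertible (mat 1 - P ** Q)"
  defines "X \<equiv> matrix_inv (mat 1 - P ** Q)"
  shows "matrix_inv (mat 1 - Q ** P) = mat 1 + Q ** X ** P"
    and "Q ** X = matrix_inv (mat 1 - Q ** P) ** Q"
proof -
  have "(P ** Q) ** X = X - mat 1" and XPQ: "X ** (P ** Q) = X - mat 1"
    using matrix_inv_inverse[OF assms(1)] unfolding X_def
    by (simp_all add: matrix_diff_rdistrib matrix_diff_ldistrib eq_diff_eq diff_eq_eq add.commute)
  then have PQX: "P ** (Q ** (X ** R)) = X ** R - R" for R
    by (metis matrix_diff_rdistrib matrix_mul_assoc matrix_mul_lid)
  have "(mat 1 - Q ** P) ** (mat 1 + Q ** X ** P) = mat 1"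
    by (simp add: matrix_add_ldistrib matrix_diff_rdistrib matrix_diff_ldistrib
        flip: matrix_mul_assoc) (simp add: PQX matrix_diff_ldistrib)
  then show inv: "matrix_inv (mat 1 - Q ** P) = mat 1 + Q ** X ** P"
    by (rule matrix_inv_eqI)
  show "Q ** X = matrix_inv (mat 1 - Q ** P) ** Q"
    by (simp add: inv matrix_add_rdistrib flip: matrix_mul_assoc)
      (simp add: XPQ matrix_diff_ldistrib)
qed

lemma block_mult:
  "block P Q R S ** block P' Q' R' S'
     = block (P ** P' + Q ** R') (P ** Q' + Q ** S') (R ** P' + S ** R') (R ** Q' + S ** S')"
proof -
  have split: "sum f (UNIV :: ('n + 'n) set) = (\<Sum>i\<in>UNIV. f (Inl i)) + (\<Sum>i\<in>UNIV. f (Inr i))"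
    for f :: "'n::finite + 'n \<Rightarrow> complex"
    by (subst UNIV_Plus_UNIV[symmetric], subst sum.Plus) (simp_all add: comp_def)
  show ?thesis
    unfolding vec_eq_iff
    by (auto simp: block_def matrix_matrix_mult_def split split: sum.split)
qed

lemma block_add: "block P Q R S + block P' Q' R' S' = block (P + P') (Q + Q') (R + R') (S + S')"
  by (simp add: vec_eq_iff block_def split: sum.split)

lemma block_diff: "block P Q R S - block P' Q' R' S' = block (P - P') (Q - Q') (R - R') (S - S')"
  by (simp add: vec_eq_iff block_def split: sum.split)

lemma block_mat_1: "mat 1 = block (mat 1) 0 0 (mat 1)"
  by (simp add: vec_eq_iff block_def mat_def split: sum.split)

lemma block_0: "0 = block 0 0 0 0"
  by (simp add: vec_eq_iff block_def split: sum.split)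

lemma block_off_diagonal_square: "block 0 P 0 0 ** block 0 P 0 0 = 0"
  by (simp add: block_mult block_0)

lemma block_shear_product:
  "(mat 1 + block 0 P 0 0 + block 0 0 Q 0) ** (mat 1 - block 0 P 0 0)
     = mat 1 - block 0 0 0 (Q ** P) + block 0 0 Q 0"
  by (simp add: block_mat_1 block_add block_diff block_mult matrix_mul_rneg)

lemma block_inverse_product:
  assumes "invertible (mat 1 - P ** Q)"
  shows "block (mat 1) 0 (- (Q ** matrix_inv (mat 1 - P ** Q))) (matrix_inv (mat 1 - Q ** P))
           ** (mat 1 + block 0 P 0 0 + block 0 0 Q 0) = mat 1 + block 0 P 0 0"
proof -
  let ?X = "matrix_inv (mat 1 - P ** Q)" and ?Y = "matrix_inv (mat 1 - Q ** P)"
  have "- (Q ** ?X) ** P + ?Y = mat 1"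
    by (simp add: matrix_inv_one_minus_swap(1)[OF assms] matrix_mul_lneg)
  moreover have "- (Q ** ?X) + ?Y ** Q = 0"
    by (simp add: matrix_inv_one_minus_swap(2)[OF assms])
  ultimately show ?thesis
    by (simp add: block_mat_1 block_add block_mult)
qed

lemma invertible_block_plus:
  assumes "invertible (mat 1 - P ** Q)"
  shows "invertible (mat 1 + block 0 P 0 0 + block 0 0 Q 0)"
proof -
  let ?F = "block 0 P 0 0" and ?A = "mat 1 + block 0 P 0 0 + block 0 0 Q 0"
  let ?B = "block (mat 1) 0 (- (Q ** matrix_inv (mat 1 - P ** Q))) (matrix_inv (mat 1 - Q ** P))"
  have "((mat 1 - ?F) ** ?B) ** ?A = (mat 1 - ?F) ** (mat 1 + ?F)"
    by (simp only: matrix_mul_assoc[symmetric] block_inverse_product[OF assms])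
  also have "\<dots> = mat 1"
    by (simp add: matrix_add_ldistrib matrix_diff_rdistrib block_off_diagonal_square)
  finally show ?thesis
    using invertible_left_inverse by blast
qed

theorem mainTheorem13:
  fixes phi :: "complex^'n::finite^'n"
  assumes "det (mat 1 - phi ** conj_mat phi) \<noteq> 0"
  shows "(\<forall>w\<in>forms.
           exp_contr (-1) (block 0 phi 0 0)
             (simcontr (mat 1 + block 0 phi 0 0 + block 0 0 (conj_mat phi) 0) w)
         = simcontr (mat 1 - block 0 0 0 (conj_mat phi ** phi) + block 0 0 (conj_mat phi) 0) w)
       \<and> (\<forall>w\<in>forms.
           inv_into forms (simcontr (mat 1 + block 0 phi 0 0 + block 0 0 (conj_mat phi) 0))
             (exp_contr 1 (block 0 phi 0 0) w)
         = simcontr (block (mat 1) 0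
                       (- (conj_mat phi ** matrix_inv (mat 1 - phi ** conj_mat phi)))
                       (matrix_inv (mat 1 - conj_mat phi ** phi))) w)"
proof -
  define F where "F = block 0 phi 0 0"
  define A where "A = mat 1 + F + block 0 0 (conj_mat phi) 0"
  define B where "B = block (mat 1) 0 (- (conj_mat phi ** matrix_inv (mat 1 - phi ** conj_mat phi)))
                       (matrix_inv (mat 1 - conj_mat phi ** phi))"
  have inv: "invertible (mat 1 - phi ** conj_mat phi)"
    using assms by (simp add: invertible_det_nz)
  have FF: "F ** F = 0"
    unfolding F_def by (rule block_off_diagonal_square)
  have BA: "B ** A = mat 1 + F"
    unfolding A_def B_def F_def by (rule block_inverse_product[OF inv])
  have "invertible A"
    unfolding A_def F_def by (rule invertible_block_plus[OF inv])
  have "exp_contr (-1) F (simcontr A w) = simcontr (A ** (mat 1 - F)) w" if "w \<in> forms" for w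
    using that by (simp add: exp_contr_square_zero_minus[OF FF] simcontr_in_forms simcontr_simcontr)
  moreover have "inv_into forms (simcontr A) (exp_contr 1 F w) = simcontr B w" if "w \<in> forms" for w
    using that inv_into_simcontr[OF \<open>invertible A\<close> simcontr_in_forms[OF that]]
    by (simp add: exp_contr_square_zero_plus[OF FF] simcontr_simcontr flip: BA)
  ultimately show ?thesis
    unfolding A_def B_def F_def block_shear_product by blast
qed

end
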